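(* Let $G=(V,E)$ be a connected graph, let $(C,+)$ be an Abelian group, let $c\colon V\to C$ be a distinguishing vertex colouring, and let $c'$ be the canonical edge colouring $c'(uv)=c(u)+c(v)$. Let $\Gamma=\{\gamma\in\operatorname{Aut} G : c'\circ\gamma=c'\}$ be the stabiliser of $c'$. Then $|\Gamma|\le |C|$.
   Context: Graphs are simple and may be infinite. Automorphisms act on edges by $\gamma(uv)=\gamma(u)\gamma(v)$. A vertex colouring $c$ is distinguishing if the identity is the only automorphism $\gamma$ with $c\circ\gamma=c$. *)

theory Defs
  imports Main
begin

text \<open>Simple graphs on the vertex type 'v (vertex set = UNIV, possibly infinite),
  given by an adjacency relation E.\<close>

definition simple_graph :: "('v \<Rightarrow> 'v \<Rightarrow> bool) \<Rightarrow> bool" where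
  "simple_graph E \<longleftrightarrow> (\<forall>u v. E u v \<longrightarrow> E v u) \<and> (\<forall>v. \<not> E v v)"

definition connected_graph :: "('v \<Rightarrow> 'v \<Rightarrow> bool) \<Rightarrow> bool" where
  "connected_graph E \<longleftrightarrow> (\<forall>u v. E\<^sup>*\<^sup>* u v)"

definition Aut :: "('v \<Rightarrow> 'v \<Rightarrow> bool) \<Rightarrow> ('v \<Rightarrow> 'v) set" where
  "Aut E = {\<gamma>. bij \<gamma> \<and> (\<forall>u v. E u v \<longleftrightarrow> E (\<gamma> u) (\<gamma> v))}"

definition distinguishing :: "('v \<Rightarrow> 'v \<Rightarrow> bool) \<Rightarrow> ('v \<Rightarrow> 'c) \<Rightarrow> bool" where
  "distinguishing E c \<longleftrightarrow> (\<forall>\<gamma>\<in>Aut E. c \<circ> \<gamma> = c \<longrightarrow> \<gamma> = id)"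

definition canonical_edge_colouring :: "('v \<Rightarrow> 'c::ab_group_add) \<Rightarrow> 'v \<Rightarrow> 'v \<Rightarrow> 'c" where
  "canonical_edge_colouring c u v = c u + c v"

definition edge_colouring_stabiliser ::
  "('v \<Rightarrow> 'v \<Rightarrow> bool) \<Rightarrow> ('v \<Rightarrow> 'v \<Rightarrow> 'c) \<Rightarrow> ('v \<Rightarrow> 'v) set" where
  "edge_colouring_stabiliser E c' =
     {\<gamma>\<in>Aut E. \<forall>u v. E u v \<longrightarrow> c' (\<gamma> u) (\<gamma> v) = c' u v}"

end

theory Submission
  imports Defs
begin

text \<open>Along every edge uw, an element \<gamma> of the stabiliser satisfies
  c(\<gamma> u) + c(\<gamma> w) = c u + c w, so in a connected graph the colouring c \<circ> \<gamma> is
  determined by the single colour c(\<gamma> v0). If two elements g, d of the stabiliser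
  give the same colour there, then g \<circ> d^-1 is an automorphism preserving c, hence
  the identity because c is distinguishing. Thus \<gamma> \<mapsto> c(\<gamma> v0) embeds the
  stabiliser into C.\<close>

lemma Aut_comp_inv:
  assumes "g \<in> Aut E" and "d \<in> Aut E"
  shows "g \<circ> inv d \<in> Aut E"
proof -
  have "bij g" "bij d" using assms by (auto simp: Aut_def)
  then have "d (inv d x) = x" for x by (simp add: bij_is_surj surj_f_inv_f)
  moreover have "E u w \<longleftrightarrow> E (g u) (g w)" "E u w \<longleftrightarrow> E (d u) (d w)" for u w
    using assms by (auto simp: Aut_def)
  ultimately have "E u w \<longleftrightarrow> E ((g \<circ> inv d) u) ((g \<circ> inv d) w)" for u w
    by (metis comp_apply)
  with \<open>bij g\<close> \<open>bij d\<close> show ?thesis by (simp add: Aut_def bij_comp bij_imp_bij_inv)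
qed

lemma distinguishing_Aut_eqI:
  assumes "distinguishing E c" and "g \<in> Aut E" and "d \<in> Aut E" and "c \<circ> g = c \<circ> d"
  shows "g = d"
proof -
  have "bij d" using assms(3) by (simp add: Aut_def)
  have "c \<circ> (g \<circ> inv d) = c \<circ> (d \<circ> inv d)"
    by (simp add: assms(4) o_assoc)
  also have "d \<circ> inv d = id" using \<open>bij d\<close> by (metis bij_is_surj surj_iff)
  finally have "g \<circ> inv d = id"
    using assms(1) Aut_comp_inv[OF assms(2,3)] unfolding distinguishing_def by (metis comp_id)
  then have "g \<circ> inv d \<circ> d = d" by simp
  then show "g = d" using \<open>bij d\<close> by (simp add: bij_is_inj)
qed

lemma connected_edge_sums_determine:
  fixes a b :: "'v \<Rightarrow> 'c::cancel_semigroup_add"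
  assumes "connected_graph E"
    and "\<And>u w. E u w \<Longrightarrow> a u + a w = b u + b w"
    and "a v0 = b v0"
  shows "a = b"
proof
  fix v
  have "E\<^sup>*\<^sup>* v0 v" using assms(1) by (simp add: connected_graph_def)
  then show "a v = b v"
  proof (induction rule: rtranclp_induct)
    case base
    show ?case using assms(3) .
  next
    case (step u w)
    then show ?case using assms(2)[OF step(2)] by simp
  qed
qed

lemma stabiliser_inj_on_colour_at:
  fixes c :: "'v \<Rightarrow> 'c::ab_group_add"
  assumes "connected_graph E" and "distinguishing E c"
  shows "inj_on (\<lambda>\<gamma>. c (\<gamma> v0)) (edge_colouring_stabiliser E (canonical_edge_colouring c))"
proof (rule inj_onI)
  fix g d
  assume g: "g \<in> edge_colouring_stabiliser E (canonical_edge_colouring c)"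
    and d: "d \<in> edge_colouring_stabiliser E (canonical_edge_colouring c)"
    and "c (g v0) = c (d v0)"
  have "(c \<circ> g) u + (c \<circ> g) w = (c \<circ> d) u + (c \<circ> d) w" if "E u w" for u w
    using g d that by (simp add: edge_colouring_stabiliser_def canonical_edge_colouring_def)
  then have "c \<circ> g = c \<circ> d"
    using connected_edge_sums_determine[OF assms(1), of "c \<circ> g" "c \<circ> d" v0]
      \<open>c (g v0) = c (d v0)\<close> by simp
  moreover have "g \<in> Aut E" "d \<in> Aut E"
    using g d by (simp_all add: edge_colouring_stabiliser_def)
  ultimately show "g = d" using assms(2) distinguishing_Aut_eqI by blast
qed

theorem mainTheorem5:
  fixes E :: "'v \<Rightarrow> 'v \<Rightarrow> bool" and c :: "'v \<Rightarrow> 'c::ab_group_add"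
  assumes "simple_graph E"
    and "connected_graph E"
    and "distinguishing E c"
  shows "(card_of (edge_colouring_stabiliser E (canonical_edge_colouring c)),
           card_of (UNIV :: 'c set)) \<in> ordLeq"
  using stabiliser_inj_on_colour_at[OF assms(2,3)] card_of_ordLeq by blast

end
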